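(* Let $|\nu|\le1$. For all $T>0$ and $\kappa>0$ there exist $\varepsilon_0>0$, $\gamma_0>0$ and $C>0$ such that \[ \|f\|^2_{L^2(H^\gamma)}=\int_0^T\int_{\mathbb{R}}|f(\tau,k)|^2(|k|^{2\gamma}+1)\,dk\,d\tau\le C\varepsilon^{1-\kappa} \] for all $\gamma\in(0,\gamma_0)$ and all $\varepsilon\in(0,\varepsilon_0)$.
   Context: Here $f=f^{(\varepsilon)}$ is the kernel $f(\tau,k)=e^{\tau\nu}\big[\chi_{(-1/\varepsilon,\infty)}(k)e^{-\tau(2+k\varepsilon)^2k^2}-e^{-4\tau k^2}\big]$ for $\tau\in[0,T]$, $k\in\mathbb{R}$ ($\chi_I$ the indicator of $I$); it is the Fourier symbol of the difference between the rescaled Swift–Hohenberg semigroup and the amplitude-equation semigroup $e^{\tau(4\partial_X^2+\nu)}$. *)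

theory Defs
  imports "HOL-Analysis.Analysis"
begin

text \<open>Kernel f^(eps)(tau,k): Fourier symbol of the difference between the rescaled
Swift--Hohenberg semigroup and the amplitude-equation semigroup.\<close>
definition SH_kernel :: "real \<Rightarrow> real \<Rightarrow> real \<Rightarrow> real \<Rightarrow> real" where
  "SH_kernel \<epsilon> \<nu> \<tau> k =
     exp (\<tau> * \<nu>) *
       ((if k \<in> {-1/\<epsilon><..} then exp (- \<tau> * (2 + k * \<epsilon>)^2 * k^2) else 0)
        - exp (- 4 * \<tau> * k^2))"

definition L2Hgamma_sq :: "real \<Rightarrow> real \<Rightarrow> (real \<Rightarrow> real \<Rightarrow> real) \<Rightarrow> ennreal" where
  "L2Hgamma_sq T \<gamma> g =
     (\<integral>\<^sup>+ \<tau>. (\<integral>\<^sup>+ k. ennreal ((g \<tau> k)^2 * (\<bar>k\<bar> powr (2*\<gamma>) + 1)) \<partial>lborel)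
        * indicator {0..T} \<tau> \<partial>lborel)"

end

theory Submission
  imports Defs
begin

text \<open>
  Up to the factor \<open>exp (\<tau> * \<nu>)\<close>, the kernel is a difference of two Gaussians in \<open>k\<close> whose
  exponents are both at least \<open>\<tau> k\<^sup>2\<close>. For \<open>\<bar>k\<bar> \<le> 1/\<epsilon>\<close> the exponents differ by at most
  \<open>5 \<epsilon> \<bar>k\<bar> \<tau> k\<^sup>2\<close>, so the mean value bound and \<open>x\<^sup>2 exp (- x) \<le> 4\<close> give
  \<open>f\<^sup>2 = O(\<epsilon>\<^sup>2 k\<^sup>2 exp (- \<tau> k\<^sup>2))\<close>; for larger \<open>\<bar>k\<bar>\<close> one only uses \<open>f\<^sup>2 \<le> exp (- 2 \<tau> k\<^sup>2)\<close>.
  Integration in \<open>\<tau>\<close> absorbs the factor \<open>k\<^sup>2\<close>. For \<open>2 \<gamma> \<le> \<delta>\<close> the \<open>H\<^sup>\<gamma>\<close> weight is at most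
  \<open>2 max 1 \<bar>k\<bar> powr \<delta>\<close>, so the low frequencies contribute \<open>O(\<epsilon>\<^sup>2 \<cdot> \<epsilon> powr (- \<delta>) \<cdot> \<epsilon> powr (- 1))\<close>
  and the high ones \<open>O(\<integral>\<^bsub>\<bar>k\<bar> > 1/\<epsilon>\<^esub> \<bar>k\<bar> powr (\<delta> - 2))\<close>, both \<open>O(\<epsilon> powr (1 - \<delta>))\<close>; take \<open>\<delta> \<le> \<kappa>\<close>.
\<close>

lemma exp_minus_diff_le:
  fixes m x y :: real
  assumes "m \<le> x" "m \<le> y"
  shows "\<bar>exp (- x) - exp (- y)\<bar> \<le> exp (- m) * \<bar>x - y\<bar>"
proof -
  have ordered: "exp (- u) - exp (- v) \<le> exp (- m) * (v - u)" if "u \<le> v" "m \<le> u" for u v :: real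
  proof -
    have "exp (- u) - exp (- v) = exp (- u) * (1 - exp (- (v - u)))"
      by (simp add: algebra_simps exp_diff[symmetric] exp_add[symmetric])
    also have "\<dots> \<le> exp (- u) * (v - u)"
      using exp_ge_add_one_self[of "u - v"] by (intro mult_left_mono) (auto simp del: exp_ge_add_one_self)
    also have "\<dots> \<le> exp (- m) * (v - u)"
      using that by (intro mult_right_mono) auto
    finally show ?thesis .
  qed
  show ?thesis
  proof (cases "x \<le> y")
    case True
    then show ?thesis using ordered[of x y] assms by simp
  next
    case False
    then show ?thesis using ordered[of y x] assms by simp
  qed
qed

lemma power2_le_4_exp:
  fixes x :: real
  assumes "0 \<le> x"
  shows "x\<^sup>2 \<le> 4 * exp x"
proof -
  have "(1 + x/2)\<^sup>2 \<le> (exp (x/2))\<^sup>2"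
    using exp_ge_add_one_self[of "x/2"] assms by (intro power_mono) auto
  also have "(exp (x/2))\<^sup>2 = exp x"
    by (simp add: power2_eq_square exp_add[symmetric])
  finally show ?thesis
    using assms by (simp add: power2_eq_square algebra_simps)
qed

lemma power2_diff_le_max:
  fixes p q :: real
  assumes "0 \<le> p" "0 \<le> q"
  shows "(p - q)\<^sup>2 \<le> max (p\<^sup>2) (q\<^sup>2)"
proof (cases "q \<le> p")
  case True
  then show ?thesis using assms power_mono[of "p - q" p 2] by simp
next
  case False
  then show ?thesis using assms power_mono[of "q - p" q 2] by (simp add: power2_commute)
qed

definition SH_diff :: "real \<Rightarrow> real \<Rightarrow> real \<Rightarrow> real" where
  "SH_diff \<epsilon> \<tau> k =
     (if k \<in> {-1/\<epsilon><..} then exp (- \<tau> * (2 + k * \<epsilon>)\<^sup>2 * k\<^sup>2) else 0) - exp (- 4 * \<tau> * k\<^sup>2)"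

lemma SH_kernel_sq: "(SH_kernel \<epsilon> \<nu> \<tau> k)\<^sup>2 = (exp (\<tau> * \<nu>))\<^sup>2 * (SH_diff \<epsilon> \<tau> k)\<^sup>2"
  by (simp add: SH_kernel_def SH_diff_def power_mult_distrib)

lemma SH_exponent_ge:
  fixes \<epsilon> \<tau> k :: real
  assumes "0 \<le> \<tau>" "-1 < k * \<epsilon>"
  shows "\<tau> * k\<^sup>2 \<le> \<tau> * (2 + k * \<epsilon>)\<^sup>2 * k\<^sup>2"
proof -
  have "1 \<le> (2 + k * \<epsilon>)\<^sup>2"
    using assms(2) by (intro one_le_power) linarith
  from mult_right_mono[OF mult_left_mono[OF this assms(1)], of "k\<^sup>2"] show ?thesis
    by simp
qed

lemma SH_diff_sq_le:
  fixes \<epsilon> \<tau> k :: real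
  assumes "0 < \<epsilon>" "0 \<le> \<tau>"
  shows "(SH_diff \<epsilon> \<tau> k)\<^sup>2 \<le> exp (- (2 * k\<^sup>2) * \<tau>)"
proof -
  have sq: "(exp (- a))\<^sup>2 \<le> exp (- (2 * k\<^sup>2) * \<tau>)" if "\<tau> * k\<^sup>2 \<le> a" for a
  proof -
    have "(exp (- a))\<^sup>2 = exp (- 2 * a)"
      by (simp add: power2_eq_square exp_add[symmetric])
    then show ?thesis using that by (simp add: algebra_simps)
  qed
  have fast: "(exp (- 4 * \<tau> * k\<^sup>2))\<^sup>2 \<le> exp (- (2 * k\<^sup>2) * \<tau>)"
    using sq[of "4 * \<tau> * k\<^sup>2"] assms by (simp add: mult_right_mono)
  show ?thesis
  proof (cases "k \<in> {-1/\<epsilon><..}")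
    case True
    then have "-1 < k * \<epsilon>" using assms by (simp add: field_simps)
    then have "(exp (- \<tau> * (2 + k * \<epsilon>)\<^sup>2 * k\<^sup>2))\<^sup>2 \<le> exp (- (2 * k\<^sup>2) * \<tau>)"
      using sq SH_exponent_ge[OF assms(2)] by simp
    then show ?thesis
      using True fast power2_diff_le_max[of "exp (- \<tau> * (2 + k * \<epsilon>)\<^sup>2 * k\<^sup>2)" "exp (- 4 * \<tau> * k\<^sup>2)"]
      by (simp add: SH_diff_def)
  next
    case False
    then show ?thesis using fast by (simp add: SH_diff_def)
  qed
qed

lemma SH_diff_sq_le_low:
  fixes \<epsilon> \<tau> k :: real
  assumes \<epsilon>: "0 < \<epsilon>" and \<tau>: "0 \<le> \<tau>" and k: "\<bar>k\<bar> \<le> 1/\<epsilon>"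
  shows "(SH_diff \<epsilon> \<tau> k)\<^sup>2 \<le> 100 * \<epsilon>\<^sup>2 * k\<^sup>2 * exp (- k\<^sup>2 * \<tau>)"
proof (cases "k \<in> {-1/\<epsilon><..}")
  case False
  then have "k = -1/\<epsilon>"
    using k by auto
  then have "\<epsilon>\<^sup>2 * k\<^sup>2 = 1"
    using \<epsilon> by (simp add: power2_eq_square)
  have "(SH_diff \<epsilon> \<tau> k)\<^sup>2 \<le> exp (- (2 * k\<^sup>2) * \<tau>)"
    by (rule SH_diff_sq_le[OF \<epsilon> \<tau>])
  also have "\<dots> \<le> exp (- k\<^sup>2 * \<tau>)"
    using \<tau> by (simp add: mult_right_mono)
  also have "\<dots> \<le> 100 * (\<epsilon>\<^sup>2 * k\<^sup>2) * exp (- k\<^sup>2 * \<tau>)"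
    using \<open>\<epsilon>\<^sup>2 * k\<^sup>2 = 1\<close> by simp
  finally show ?thesis
    by (simp add: mult.assoc)
next
  case True
  define x where "x = \<tau> * k\<^sup>2"
  have x: "0 \<le> x" using \<tau> by (simp add: x_def)
  have k\<epsilon>: "\<bar>k * \<epsilon>\<bar> \<le> 1" "-1 < k * \<epsilon>"
    using k True \<epsilon> by (auto simp: field_simps abs_mult)
  have "\<bar>SH_diff \<epsilon> \<tau> k\<bar>
      \<le> exp (- x) * \<bar>\<tau> * (2 + k * \<epsilon>)\<^sup>2 * k\<^sup>2 - 4 * \<tau> * k\<^sup>2\<bar>"
    using True exp_minus_diff_le[OF SH_exponent_ge[OF \<tau> k\<epsilon>(2)], of "4 * \<tau> * k\<^sup>2"] \<tau>
    by (simp add: SH_diff_def x_def mult_right_mono)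
  also have "\<bar>\<tau> * (2 + k * \<epsilon>)\<^sup>2 * k\<^sup>2 - 4 * \<tau> * k\<^sup>2\<bar> = x * \<bar>k\<bar> * \<epsilon> * \<bar>4 + k * \<epsilon>\<bar>"
  proof -
    have "\<tau> * (2 + k * \<epsilon>)\<^sup>2 * k\<^sup>2 - 4 * \<tau> * k\<^sup>2 = x * k * \<epsilon> * (4 + k * \<epsilon>)"
      by (simp add: x_def power2_eq_square algebra_simps)
    then show ?thesis using \<tau> \<epsilon> by (simp add: x_def abs_mult)
  qed
  also have "\<dots> \<le> x * \<bar>k\<bar> * \<epsilon> * 5"
    using k\<epsilon> x \<epsilon> by (intro mult_left_mono) auto
  finally have "\<bar>SH_diff \<epsilon> \<tau> k\<bar> \<le> exp (- x) * (x * \<bar>k\<bar> * \<epsilon> * 5)"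
    by (simp add: mult_left_mono)
  then have "(SH_diff \<epsilon> \<tau> k)\<^sup>2 \<le> (exp (- x) * (x * \<bar>k\<bar> * \<epsilon> * 5))\<^sup>2"
    by (metis abs_ge_zero power2_abs power_mono)
  also have "\<dots> = 25 * \<epsilon>\<^sup>2 * k\<^sup>2 * (x\<^sup>2 * exp (- x) * exp (- x))"
    by (simp add: power2_eq_square algebra_simps)
  also have "\<dots> \<le> 25 * \<epsilon>\<^sup>2 * k\<^sup>2 * (4 * exp x * exp (- x) * exp (- x))"
    using power2_le_4_exp[OF x] by (intro mult_left_mono mult_right_mono) auto
  also have "\<dots> = 100 * \<epsilon>\<^sup>2 * k\<^sup>2 * exp (- k\<^sup>2 * \<tau>)"
    by (simp add: x_def exp_minus field_simps)
  finally show ?thesis .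
qed

definition freq_weight :: "real \<Rightarrow> real \<Rightarrow> real" where
  "freq_weight \<delta> k = max 1 \<bar>k\<bar> powr \<delta>"

lemma Hgamma_weight_le_freq_weight:
  fixes \<gamma> \<delta> k :: real
  assumes "0 < \<gamma>" "2 * \<gamma> \<le> \<delta>"
  shows "\<bar>k\<bar> powr (2 * \<gamma>) + 1 \<le> 2 * freq_weight \<delta> k"
proof -
  have one_le: "1 \<le> freq_weight \<delta> k"
    unfolding freq_weight_def using assms by (simp add: ge_one_powr_ge_zero)
  have "\<bar>k\<bar> powr (2 * \<gamma>) \<le> freq_weight \<delta> k"
  proof (cases "\<bar>k\<bar> \<le> 1")
    case True
    then have "\<bar>k\<bar> powr (2 * \<gamma>) \<le> 1 powr (2 * \<gamma>)"
      using assms by (intro powr_mono2) auto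
    then show ?thesis using one_le by simp
  next
    case False
    then have "\<bar>k\<bar> powr (2 * \<gamma>) \<le> \<bar>k\<bar> powr \<delta>"
      using assms by (intro powr_mono) auto
    then show ?thesis using False by (simp add: freq_weight_def)
  qed
  then show ?thesis using one_le by simp
qed

definition SH_majorant :: "real \<Rightarrow> real \<Rightarrow> real \<Rightarrow> real \<Rightarrow> real" where
  "SH_majorant T \<delta> \<epsilon> k =
     exp (2 * T) * (if \<bar>k\<bar> \<le> 1/\<epsilon> then 200 * \<epsilon> powr (2 - \<delta>) else \<bar>k\<bar> powr (\<delta> - 2))"

lemma exp_mult_sq_le:
  fixes \<nu> \<tau> T :: real
  assumes "\<bar>\<nu>\<bar> \<le> 1" "0 \<le> \<tau>" "\<tau> \<le> T"
  shows "(exp (\<tau> * \<nu>))\<^sup>2 \<le> exp (2 * T)"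
proof -
  have "\<tau> * \<nu> \<le> T"
    using assms mult_left_mono[of \<nu> 1 \<tau>] abs_le_D1[OF assms(1)] by simp
  then show ?thesis
    by (simp add: power2_eq_square exp_add[symmetric] mult.commute)
qed

lemma SH_kernel_weighted_le_low:
  fixes \<epsilon> \<nu> \<tau> T \<delta> k :: real
  assumes \<epsilon>: "0 < \<epsilon>" "\<epsilon> < 1" and \<nu>: "\<bar>\<nu>\<bar> \<le> 1" and \<tau>: "0 \<le> \<tau>" "\<tau> \<le> T"
    and \<delta>: "0 < \<delta>" and k: "\<bar>k\<bar> \<le> 1/\<epsilon>"
  shows "(SH_kernel \<epsilon> \<nu> \<tau> k)\<^sup>2 * (2 * freq_weight \<delta> k)
         \<le> SH_majorant T \<delta> \<epsilon> k * (k\<^sup>2 * exp (- k\<^sup>2 * \<tau>))"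
proof -
  have "max 1 \<bar>k\<bar> \<le> 1/\<epsilon>"
    using k \<epsilon> by (simp add: field_simps)
  then have weight: "freq_weight \<delta> k \<le> (1/\<epsilon>) powr \<delta>"
    unfolding freq_weight_def using \<delta> by (intro powr_mono2) auto
  have "(SH_kernel \<epsilon> \<nu> \<tau> k)\<^sup>2 * (2 * freq_weight \<delta> k)
      \<le> (exp (2 * T) * (100 * \<epsilon>\<^sup>2 * k\<^sup>2 * exp (- k\<^sup>2 * \<tau>))) * (2 * (1/\<epsilon>) powr \<delta>)"
    unfolding SH_kernel_sq using exp_mult_sq_le[OF \<nu> \<tau>] SH_diff_sq_le_low[OF \<epsilon>(1) \<tau>(1) k] weight
    by (intro mult_mono) (auto simp: freq_weight_def)
  also have "\<dots> = exp (2 * T) * (200 * (\<epsilon>\<^sup>2 * (1/\<epsilon>) powr \<delta>)) * (k\<^sup>2 * exp (- k\<^sup>2 * \<tau>))"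
    by (simp add: algebra_simps)
  also have "\<epsilon>\<^sup>2 * (1/\<epsilon>) powr \<delta> = \<epsilon> powr (2 - \<delta>)"
    using \<epsilon>(1) by (simp add: powr_diff powr_divide field_simps flip: powr_numeral)
  finally show ?thesis
    unfolding SH_majorant_def using k by simp
qed

lemma SH_kernel_weighted_le_high:
  fixes \<epsilon> \<nu> \<tau> T \<delta> k :: real
  assumes \<epsilon>: "0 < \<epsilon>" "\<epsilon> < 1" and \<nu>: "\<bar>\<nu>\<bar> \<le> 1" and \<tau>: "0 \<le> \<tau>" "\<tau> \<le> T"
    and k: "1/\<epsilon> < \<bar>k\<bar>"
  shows "(SH_kernel \<epsilon> \<nu> \<tau> k)\<^sup>2 * (2 * freq_weight \<delta> k)
         \<le> SH_majorant T \<delta> \<epsilon> k * (2 * k\<^sup>2 * exp (- (2 * k\<^sup>2) * \<tau>))"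
proof -
  have "1 < \<bar>k\<bar>"
    using k \<epsilon> by (smt (verit) divide_less_eq_1_pos)
  then have weight: "freq_weight \<delta> k = \<bar>k\<bar> powr \<delta>" and "\<bar>k\<bar> powr 2 = k\<^sup>2"
    by (auto simp: freq_weight_def powr_numeral)
  have "(SH_kernel \<epsilon> \<nu> \<tau> k)\<^sup>2 * (2 * freq_weight \<delta> k)
      \<le> (exp (2 * T) * exp (- (2 * k\<^sup>2) * \<tau>)) * (2 * freq_weight \<delta> k)"
    unfolding SH_kernel_sq using exp_mult_sq_le[OF \<nu> \<tau>] SH_diff_sq_le[OF \<epsilon>(1) \<tau>(1)]
    by (intro mult_mono) (auto simp: freq_weight_def)
  also have "\<dots> = exp (2 * T) * (\<bar>k\<bar> powr \<delta> / \<bar>k\<bar> powr 2) * (2 * k\<^sup>2 * exp (- (2 * k\<^sup>2) * \<tau>))"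
    using \<open>1 < \<bar>k\<bar>\<close> unfolding weight \<open>\<bar>k\<bar> powr 2 = k\<^sup>2\<close> by (simp add: field_simps)
  finally show ?thesis
    unfolding SH_majorant_def using k by (simp add: powr_diff)
qed

lemma nn_integral_exp_decay_le_one:
  fixes c T :: real
  assumes "0 \<le> c" "0 \<le> T"
  shows "(\<integral>\<^sup>+\<tau>. ennreal (c * exp (- c * \<tau>)) * indicator {0..T} \<tau> \<partial>lborel) \<le> 1"
proof -
  have "(\<integral>\<^sup>+\<tau>. ennreal (c * exp (- c * \<tau>)) * indicator {0..T} \<tau> \<partial>lborel)
        = ennreal (- exp (- c * T) - (- exp (- c * 0)))"
    using assms by (intro nn_integral_FTC_Icc) (auto intro!: derivative_eq_intros)
  also have "\<dots> \<le> 1"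
    by simp
  finally show ?thesis .
qed

lemma nn_integral_SH_kernel_time_le:
  fixes \<epsilon> \<nu> T \<delta> k :: real
  assumes \<epsilon>: "0 < \<epsilon>" "\<epsilon> < 1" and \<nu>: "\<bar>\<nu>\<bar> \<le> 1" and T: "0 \<le> T" and \<delta>: "0 < \<delta>"
  shows "(\<integral>\<^sup>+\<tau>. ennreal ((SH_kernel \<epsilon> \<nu> \<tau> k)\<^sup>2 * (2 * freq_weight \<delta> k)) * indicator {0..T} \<tau> \<partial>lborel)
         \<le> ennreal (SH_majorant T \<delta> \<epsilon> k)"
proof -
  let ?H = "SH_majorant T \<delta> \<epsilon> k"
  obtain c where c: "0 \<le> c" and pointwise: "\<And>\<tau>. 0 \<le> \<tau> \<Longrightarrow> \<tau> \<le> T \<Longrightarrow>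
     (SH_kernel \<epsilon> \<nu> \<tau> k)\<^sup>2 * (2 * freq_weight \<delta> k) \<le> ?H * (c * exp (- c * \<tau>))"
  proof (cases "\<bar>k\<bar> \<le> 1/\<epsilon>")
    case True
    show ?thesis
      by (rule that[of "k\<^sup>2"]) (use SH_kernel_weighted_le_low[OF \<epsilon> \<nu> _ _ \<delta> True] in auto)
  next
    case False
    show ?thesis
      by (rule that[of "2 * k\<^sup>2"]) (use SH_kernel_weighted_le_high[OF \<epsilon> \<nu>] False in auto)
  qed
  have "(\<integral>\<^sup>+\<tau>. ennreal ((SH_kernel \<epsilon> \<nu> \<tau> k)\<^sup>2 * (2 * freq_weight \<delta> k)) * indicator {0..T} \<tau> \<partial>lborel)
      \<le> (\<integral>\<^sup>+\<tau>. ennreal ?H * (ennreal (c * exp (- c * \<tau>)) * indicator {0..T} \<tau>) \<partial>lborel)"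
    using pointwise c by (intro nn_integral_mono)
      (auto simp: ennreal_mult'[symmetric] SH_majorant_def intro!: ennreal_leI split: split_indicator)
  also have "\<dots> = ennreal ?H * (\<integral>\<^sup>+\<tau>. ennreal (c * exp (- c * \<tau>)) * indicator {0..T} \<tau> \<partial>lborel)"
    by (rule nn_integral_cmult) measurable
  also have "\<dots> \<le> ennreal ?H"
    using nn_integral_exp_decay_le_one[OF c T] mult_left_mono[of _ 1 "ennreal ?H"] by simp
  finally show ?thesis .
qed

lemma nn_integral_powr_atLeast:
  fixes p R :: real
  assumes p: "p < -1" and R: "0 < R"
  shows "(\<integral>\<^sup>+k. ennreal (k powr p) * indicator {R..} k \<partial>lborel) = ennreal (R powr (p + 1) / (- p - 1))"
proof -
  have "(\<integral>\<^sup>+k. ennreal (k powr p) * indicator {R..} k \<partial>lborel) = ennreal (0 - R powr (p + 1) / (p + 1))"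
  proof (rule nn_integral_FTC_atLeast)
    fix x assume "R \<le> x"
    then have "0 < x" using R by simp
    then have "((\<lambda>k. k powr (p + 1) / (p + 1)) has_real_derivative (p + 1) * x powr (p + 1 - 1) / (p + 1)) (at x)"
      by (auto intro!: derivative_eq_intros)
    then show "((\<lambda>k. k powr (p + 1) / (p + 1)) has_real_derivative x powr p) (at x)"
      using p by simp
  next
    have "((\<lambda>k. k powr (p + 1)) \<longlongrightarrow> 0) at_top"
      using p by (intro tendsto_neg_powr) (auto simp: filterlim_ident)
    then show "((\<lambda>k. k powr (p + 1) / (p + 1)) \<longlongrightarrow> 0) at_top"
      using tendsto_divide_zero by blast
  qed auto
  also have "0 - R powr (p + 1) / (p + 1) = R powr (p + 1) / (- p - 1)"
    using p by (simp add: field_simps)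
  finally show ?thesis .
qed

lemma nn_integral_abs_powr_outside:
  fixes p R :: real
  assumes p: "p < -1" and R: "0 < R"
  shows "(\<integral>\<^sup>+k. ennreal (\<bar>k\<bar> powr p) * indicator {k. R \<le> \<bar>k\<bar>} k \<partial>lborel)
         = ennreal (2 * (R powr (p + 1) / (- p - 1)))"
proof -
  let ?f = "\<lambda>k::real. ennreal (\<bar>k\<bar> powr p) * indicator {R..} k"
  have right: "(\<integral>\<^sup>+k. ?f k \<partial>lborel) = ennreal (R powr (p + 1) / (- p - 1))"
    using R by (subst nn_integral_powr_atLeast[OF p R, symmetric])
      (auto intro!: nn_integral_cong split: split_indicator)
  have left: "(\<integral>\<^sup>+k. ?f (- k) \<partial>lborel) = (\<integral>\<^sup>+k. ?f k \<partial>lborel)"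
    using nn_integral_real_affine[of ?f "-1" 0] by simp
  have "(\<integral>\<^sup>+k. ennreal (\<bar>k\<bar> powr p) * indicator {k. R \<le> \<bar>k\<bar>} k \<partial>lborel)
        = (\<integral>\<^sup>+k. ?f k + ?f (- k) \<partial>lborel)"
    using R by (intro nn_integral_cong) (auto split: split_indicator)
  also have "\<dots> = (\<integral>\<^sup>+k. ?f k \<partial>lborel) + (\<integral>\<^sup>+k. ?f (- k) \<partial>lborel)"
    by (rule nn_integral_add) measurable
  finally show ?thesis
    unfolding left right using p R by (simp add: ennreal_plus[symmetric] del: ennreal_plus)
qed

lemma nn_integral_SH_majorant_le:
  fixes \<epsilon> T \<delta> :: real
  assumes \<epsilon>: "0 < \<epsilon>" and \<delta>: "\<delta> < 1"
  shows "(\<integral>\<^sup>+k. ennreal (SH_majorant T \<delta> \<epsilon> k) \<partial>lborel)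
         \<le> ennreal (exp (2 * T) * (400 + 2 / (1 - \<delta>)) * \<epsilon> powr (1 - \<delta>))"
proof -
  define R where "R = 1/\<epsilon>"
  have R: "0 < R" using \<epsilon> by (simp add: R_def)
  define A where "A = exp (2 * T) * 200 * \<epsilon> powr (2 - \<delta>)"
  have A: "0 \<le> A" by (simp add: A_def)
  have "(\<integral>\<^sup>+k. ennreal (SH_majorant T \<delta> \<epsilon> k) \<partial>lborel)
     \<le> (\<integral>\<^sup>+k. ennreal A * indicator {-R..R} k
               + ennreal (exp (2 * T)) * (ennreal (\<bar>k\<bar> powr (\<delta> - 2)) * indicator {k. R \<le> \<bar>k\<bar>} k) \<partial>lborel)"
    by (intro nn_integral_mono)
      (auto simp: SH_majorant_def A_def R_def abs_le_iff ennreal_mult mult.assoc split: split_indicator)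
  also have "\<dots> = ennreal A * ennreal (2 * R)
                 + ennreal (exp (2 * T)) * ennreal (2 * (R powr (\<delta> - 1) / (1 - \<delta>)))"
    using nn_integral_abs_powr_outside[of "\<delta> - 2" R] \<delta> R
    by (subst nn_integral_add) (auto simp: nn_integral_cmult_indicator nn_integral_cmult)
  also have "\<dots> = ennreal (exp (2 * T) * (400 + 2 / (1 - \<delta>)) * \<epsilon> powr (1 - \<delta>))"
  proof -
    have "R powr (\<delta> - 1) = \<epsilon> powr (1 - \<delta>)"
      using \<epsilon> by (simp add: R_def powr_divide powr_diff)
    moreover have "A * (2 * R) = exp (2 * T) * 400 * \<epsilon> powr (1 - \<delta>)"
      using \<epsilon> powr_add[of \<epsilon> 1 "1 - \<delta>"] by (simp add: A_def R_def)
    ultimately show ?thesis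
      using A R \<delta> by (simp add: ennreal_mult[symmetric] ennreal_plus[symmetric] algebra_simps
          del: ennreal_plus)
  qed
  finally show ?thesis .
qed

lemma L2Hgamma_sq_SH_kernel_le:
  fixes \<epsilon> \<nu> T \<gamma> \<delta> :: real
  assumes \<epsilon>: "0 < \<epsilon>" "\<epsilon> < 1" and \<nu>: "\<bar>\<nu>\<bar> \<le> 1" and T: "0 \<le> T"
    and \<gamma>: "0 < \<gamma>" "2 * \<gamma> \<le> \<delta>" and \<delta>: "\<delta> < 1"
  shows "L2Hgamma_sq T \<gamma> (SH_kernel \<epsilon> \<nu>)
         \<le> ennreal (exp (2 * T) * (400 + 2 / (1 - \<delta>)) * \<epsilon> powr (1 - \<delta>))"
proof -
  let ?F = "\<lambda>\<tau> k. ennreal ((SH_kernel \<epsilon> \<nu> \<tau> k)\<^sup>2 * (2 * freq_weight \<delta> k)) * indicator {0..T} \<tau>"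
  have "L2Hgamma_sq T \<gamma> (SH_kernel \<epsilon> \<nu>) \<le> (\<integral>\<^sup>+\<tau>. (\<integral>\<^sup>+k. ?F \<tau> k \<partial>lborel) \<partial>lborel)"
    unfolding L2Hgamma_sq_def using Hgamma_weight_le_freq_weight[OF \<gamma>]
    by (intro nn_integral_mono)
      (auto simp: nn_integral_multc[symmetric] intro!: nn_integral_mono ennreal_leI mult_left_mono
        split: split_indicator)
  also have "\<dots> = (\<integral>\<^sup>+k. (\<integral>\<^sup>+\<tau>. ?F \<tau> k \<partial>lborel) \<partial>lborel)"
    by (rule lborel_pair.Fubini') (unfold SH_kernel_def freq_weight_def, measurable)
  also have "\<dots> \<le> (\<integral>\<^sup>+k. ennreal (SH_majorant T \<delta> \<epsilon> k) \<partial>lborel)"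
    using \<gamma> by (intro nn_integral_mono nn_integral_SH_kernel_time_le[OF \<epsilon> \<nu> T]) auto
  also have "\<dots> \<le> ennreal (exp (2 * T) * (400 + 2 / (1 - \<delta>)) * \<epsilon> powr (1 - \<delta>))"
    by (rule nn_integral_SH_majorant_le[OF \<epsilon>(1) \<delta>])
  finally show ?thesis .
qed

theorem mainTheorem13:
  fixes \<nu> :: real
  assumes "\<bar>\<nu>\<bar> \<le> 1"
  shows "\<forall>T>0. \<forall>\<kappa>>0. \<exists>\<epsilon>\<^sub>0>0. \<exists>\<gamma>\<^sub>0>0. \<exists>C>0.
           \<forall>\<gamma>\<in>{0<..<\<gamma>\<^sub>0}. \<forall>\<epsilon>\<in>{0<..<\<epsilon>\<^sub>0}.
             L2Hgamma_sq T \<gamma> (SH_kernel \<epsilon> \<nu>) \<le> ennreal (C * \<epsilon> powr (1 - \<kappa>))"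
proof (intro allI impI)
  fix T \<kappa> :: real
  assume T: "0 < T" and \<kappa>: "0 < \<kappa>"
  define \<delta> where "\<delta> = min \<kappa> 1 / 2"
  have \<delta>: "0 < \<delta>" "\<delta> < 1" "\<delta> \<le> \<kappa>"
    using \<kappa> by (auto simp: \<delta>_def)
  define C where "C = exp (2 * T) * (400 + 2 / (1 - \<delta>))"
  have C: "0 < C"
    using \<delta> by (simp add: C_def add_pos_pos)
  have "L2Hgamma_sq T \<gamma> (SH_kernel \<epsilon> \<nu>) \<le> ennreal (C * \<epsilon> powr (1 - \<kappa>))"
    if "\<gamma> \<in> {0<..<\<delta>/2}" "\<epsilon> \<in> {0<..<1}" for \<gamma> \<epsilon>
  proof -
    have "L2Hgamma_sq T \<gamma> (SH_kernel \<epsilon> \<nu>) \<le> ennreal (C * \<epsilon> powr (1 - \<delta>))"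
      unfolding C_def using that assms T \<delta> by (intro L2Hgamma_sq_SH_kernel_le) auto
    also have "\<dots> \<le> ennreal (C * \<epsilon> powr (1 - \<kappa>))"
      using C that \<delta> by (intro ennreal_leI mult_left_mono powr_mono') auto
    finally show ?thesis .
  qed
  then show "\<exists>\<epsilon>\<^sub>0>0. \<exists>\<gamma>\<^sub>0>0. \<exists>C>0. \<forall>\<gamma>\<in>{0<..<\<gamma>\<^sub>0}. \<forall>\<epsilon>\<in>{0<..<\<epsilon>\<^sub>0}.
             L2Hgamma_sq T \<gamma> (SH_kernel \<epsilon> \<nu>) \<le> ennreal (C * \<epsilon> powr (1 - \<kappa>))"
    using C \<delta> by (intro exI[of _ 1] conjI exI[of _ "\<delta>/2"] exI[of _ C]) auto
qed

end
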